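(* Let $A$ be a regular vertex of a phylogenetic quiver $\mathcal O$, let $B$ be a vertex of the clade $\mathcal O_A$, and set $m=h(A)$, $n=h(B)$ (so $n\ge m$). If $p^{n-m}([B])\neq[A]$, then $B$ is a phylogenetic vertex of $\mathcal O_A$ and $h_A(B)=n-m+1$.
   Context: A quiver consists of a class of vertices and, for each ordered pair of vertices $(A,B)$, a set of edges $A\to B$ (loops and multiple edges allowed). An evolution of length $m\ge 0$ is a sequence $A_0\leftarrow A_1\leftarrow\cdots\leftarrow A_m$ of vertices together with edges $A_k\to A_{k-1}$ ($1\le k\le m$); $A_0$ is its initial and $A_m$ its terminal vertex. Write $A\le B$ ($A$ is an ancestor of $B$, $B$ a descendant of $A$) if there is an evolution with initial vertex $A$ and terminal vertex $B$; $A,B$ are isotypic ($A\sim B$) if $A\le B$ and $B\le A$. A vertex $A$ is primitive if every ancestor of $A$ is isotypic to $A$. A full evolution for $X$ is an evolution with primitive initial vertex and terminal vertex $X$. The height $h(X)$ is the smallest length of a full evolution for $X$ ($\infty$ if none). An evolution $\alpha=(A_0\leftarrow\cdots\leftarrow A_m)$ embeds in $\beta=(B_0\leftarrow\cdots\leftarrow B_n)$ if $m\le n$ and there are $0\le r_0<\cdots<r_m\le n$ with $A_k\sim B_{r_k}$. A universal evolution for $X$ is a full evolution for $X$ embedding in every full evolution for $X$; $X$ is phylogenetic if one exists. A quiver is monotonous if $h(A)\ge h(B)$ for every edge $A\to B$; small if its isotypy classes form a set; phylogenetic if small, monotonous, and all vertices phylogenetic. For a phylogenetic quiver, $[A]$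 denotes the isotypy class of $A$, $\mathcal O_m$ the set of isotypy classes of vertices of height $m$, and for $m\ge1$ the parental map $p:\mathcal O_m\to\mathcal O_{m-1}$ is $p([A])=[A_{m-1}]$ where $A_0\leftarrow\cdots\leftarrow A_{m-1}\leftarrow A_m=A$ is any universal evolution for $A$ (well defined); $p^0$ is the identity. The clade $\mathcal O_A$ is the quiver formed by all descendants of $A$ in $\mathcal O$ and all edges between them; $h_A$ denotes height computed in $\mathcal O_A$, and phylogeneticity in $\mathcal O_A$ is likewise computed within $\mathcal O_A$. A vertex $A$ is regular if for every $B$ in $\mathcal O_A$ with $h(B)=h(A)$ there is an edge $B\to A$ in $\mathcal O$. *)

theory Defs
  imports Main "HOL-Library.Extended_Nat"
begin

text \<open>A quiver is given by a vertex set V and, for each ordered pair (A,B), the set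
  E A B of edges from A to B.  An evolution A_0 <- A_1 <- ... <- A_m is represented by
  the vertex list as = [A_0,...,A_m] and the edge list es = [e_1,...,e_m] where
  e_k is an edge A_k -> A_(k-1) (stored at index k-1).\<close>

definition evolution :: "'v set \<Rightarrow> ('v \<Rightarrow> 'v \<Rightarrow> 'e set) \<Rightarrow> 'v list \<Rightarrow> 'e list \<Rightarrow> bool" where
  "evolution V E as es \<longleftrightarrow> as \<noteq> [] \<and> set as \<subseteq> V \<and> length es + 1 = length as \<and>
     (\<forall>k<length es. es ! k \<in> E (as ! (k+1)) (as ! k))"

definition ancestor :: "'v set \<Rightarrow> ('v \<Rightarrow> 'v \<Rightarrow> 'e set) \<Rightarrow> 'v \<Rightarrow> 'v \<Rightarrow> bool" where
  "ancestor V E A B \<longleftrightarrow> (\<exists>as es. evolution V E as es \<and> hd as = A \<and> last as = B)"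

definition isotypic :: "'v set \<Rightarrow> ('v \<Rightarrow> 'v \<Rightarrow> 'e set) \<Rightarrow> 'v \<Rightarrow> 'v \<Rightarrow> bool" where
  "isotypic V E A B \<longleftrightarrow> ancestor V E A B \<and> ancestor V E B A"

definition primitive :: "'v set \<Rightarrow> ('v \<Rightarrow> 'v \<Rightarrow> 'e set) \<Rightarrow> 'v \<Rightarrow> bool" where
  "primitive V E A \<longleftrightarrow> A \<in> V \<and> (\<forall>B. ancestor V E B A \<longrightarrow> isotypic V E B A)"

definition full_evolution :: "'v set \<Rightarrow> ('v \<Rightarrow> 'v \<Rightarrow> 'e set) \<Rightarrow> 'v list \<Rightarrow> 'e list \<Rightarrow> 'v \<Rightarrow> bool" where
  "full_evolution V E as es X \<longleftrightarrow> evolution V E as es \<and> primitive V E (hd as) \<and> last as = X"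

text \<open>Height: least length of a full evolution; infinity if there is none (Inf {} = \<infinity>).\<close>
definition height :: "'v set \<Rightarrow> ('v \<Rightarrow> 'v \<Rightarrow> 'e set) \<Rightarrow> 'v \<Rightarrow> enat" where
  "height V E X = Inf ((\<lambda>(as, es). enat (length es)) ` {(as, es). full_evolution V E as es X})"

definition embeds :: "'v set \<Rightarrow> ('v \<Rightarrow> 'v \<Rightarrow> 'e set) \<Rightarrow> 'v list \<Rightarrow> 'v list \<Rightarrow> bool" where
  "embeds V E as bs \<longleftrightarrow> length as \<le> length bs \<and>
     (\<exists>r. strict_mono_on {..<length as} r \<and>
          (\<forall>k<length as. r k < length bs \<and> isotypic V E (as ! k) (bs ! r k)))"

definition universal_evolution :: "'v set \<Rightarrow> ('v \<Rightarrow> 'v \<Rightarrow> 'e set) \<Rightarrow> 'v list \<Rightarrow> 'e list \<Rightarrow> 'v \<Rightarrow> bool" where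
  "universal_evolution V E as es X \<longleftrightarrow> full_evolution V E as es X \<and>
     (\<forall>bs fs. full_evolution V E bs fs X \<longrightarrow> embeds V E as bs)"

definition phylogenetic_vertex :: "'v set \<Rightarrow> ('v \<Rightarrow> 'v \<Rightarrow> 'e set) \<Rightarrow> 'v \<Rightarrow> bool" where
  "phylogenetic_vertex V E X \<longleftrightarrow> (\<exists>as es. universal_evolution V E as es X)"

definition monotonous :: "'v set \<Rightarrow> ('v \<Rightarrow> 'v \<Rightarrow> 'e set) \<Rightarrow> bool" where
  "monotonous V E \<longleftrightarrow> (\<forall>A\<in>V. \<forall>B\<in>V. E A B \<noteq> {} \<longrightarrow> height V E B \<le> height V E A)"

text \<open>Smallness (isotypy classes form a set) is automatic in HOL.\<close>
definition phylogenetic_quiver :: "'v set \<Rightarrow> ('v \<Rightarrow> 'v \<Rightarrow> 'e set) \<Rightarrow> bool" where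
  "phylogenetic_quiver V E \<longleftrightarrow> monotonous V E \<and> (\<forall>X\<in>V. phylogenetic_vertex V E X)"

definition iso_class :: "'v set \<Rightarrow> ('v \<Rightarrow> 'v \<Rightarrow> 'e set) \<Rightarrow> 'v \<Rightarrow> 'v set" where
  "iso_class V E A = {B\<in>V. isotypic V E A B}"

text \<open>Parental map: the class of the penultimate vertex A_(m-1) of a universal evolution
  of some representative (well defined by the paper).\<close>
definition parent :: "'v set \<Rightarrow> ('v \<Rightarrow> 'v \<Rightarrow> 'e set) \<Rightarrow> 'v set \<Rightarrow> 'v set" where
  "parent V E c = iso_class V E
     (SOME P. \<exists>A\<in>c. \<exists>as es. universal_evolution V E as es A \<and> P = as ! (length es - 1))"

text \<open>Vertex set of the clade O_A; the clade quiver is (clade V E A, E) (edges between its vertices).\<close>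
definition clade :: "'v set \<Rightarrow> ('v \<Rightarrow> 'v \<Rightarrow> 'e set) \<Rightarrow> 'v \<Rightarrow> 'v set" where
  "clade V E A = {B\<in>V. ancestor V E A B}"

definition regular :: "'v set \<Rightarrow> ('v \<Rightarrow> 'v \<Rightarrow> 'e set) \<Rightarrow> 'v \<Rightarrow> bool" where
  "regular V E A \<longleftrightarrow> A \<in> V \<and>
     (\<forall>B\<in>clade V E A. height V E B = height V E A \<longrightarrow> E B A \<noteq> {})"

end

theory Submission
  imports Defs
begin

text \<open>Let \<open>u\<^sub>0 \<leftarrow> \<dots> \<leftarrow> u\<^sub>n = B\<close> be a universal evolution of \<open>B\<close>; then \<open>h(u\<^sub>i) = i\<close> and
  \<open>p\<^sup>n\<^sup>-\<^sup>m[B] = [u\<^sub>m]\<close>, so \<open>u\<^sub>m\<close> is not isotypic to \<open>A\<close>. A full evolution of \<open>B\<close> in the clade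
  starts at a vertex isotypic to \<open>A\<close>, of height \<open>m\<close>; prefixing it with a shortest full evolution
  of that vertex gives a full evolution of \<open>B\<close> in \<open>\<O>\<close>, into which \<open>u\<close> embeds. The embedding
  sends \<open>u\<^sub>m, \<dots>, u\<^sub>n\<close> into the clade part, and strictly past its start because \<open>u\<^sub>m \<not>\<sim> A\<close>.
  Hence \<open>u\<^sub>m\<close> lies in the clade, regularity gives an edge \<open>u\<^sub>m \<rightarrow> A\<close>, and
  \<open>A \<leftarrow> u\<^sub>m \<leftarrow> \<dots> \<leftarrow> u\<^sub>n\<close> is a full evolution of \<open>B\<close> in the clade, of length \<open>n - m + 1\<close>,
  that embeds in every other one.\<close>

text \<open>Evolutions are handled through their vertex lists: edges matter only through the
  nonemptiness of \<open>E\<close>, and embeddings, heights and the parental map depend on vertices only.\<close>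

definition walk :: "'v set \<Rightarrow> ('v \<Rightarrow> 'v \<Rightarrow> 'e set) \<Rightarrow> 'v list \<Rightarrow> bool" where
  "walk V E xs \<longleftrightarrow> (\<exists>es. evolution V E xs es)"

lemma walk_iff:
  "walk V E xs \<longleftrightarrow>
    xs \<noteq> [] \<and> set xs \<subseteq> V \<and> (\<forall>k. Suc k < length xs \<longrightarrow> E (xs ! Suc k) (xs ! k) \<noteq> {})"
  (is "_ \<longleftrightarrow> ?R")
proof
  assume "walk V E xs"
  then show ?R unfolding walk_def evolution_def by (metis Suc_eq_plus1 Suc_less_eq empty_iff)
next
  assume xs: ?R
  define es where "es = map (\<lambda>k. SOME e. e \<in> E (xs ! Suc k) (xs ! k)) [0..<length xs - 1]"
  have "evolution V E xs es"
    using xs unfolding evolution_def es_def by (auto simp: some_in_eq)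
  then show "walk V E xs" unfolding walk_def by blast
qed

lemma evolution_length: "evolution V E as es \<Longrightarrow> length es = length as - 1"
  unfolding evolution_def by auto

lemma walk_nonempty: "walk V E xs \<Longrightarrow> xs \<noteq> []"
  by (simp add: walk_iff)

lemma walk_nth_in: "walk V E xs \<Longrightarrow> i < length xs \<Longrightarrow> xs ! i \<in> V"
  by (auto simp: walk_iff)

lemma walk_edge: "walk V E xs \<Longrightarrow> Suc k < length xs \<Longrightarrow> E (xs ! Suc k) (xs ! k) \<noteq> {}"
  by (simp add: walk_iff)

lemma walk_singleton: "X \<in> V \<Longrightarrow> walk V E [X]"
  by (simp add: walk_iff)

lemma walk_take: "walk V E xs \<Longrightarrow> 0 < i \<Longrightarrow> walk V E (take i xs)"
  by (auto simp: walk_iff dest: in_set_takeD)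

lemma walk_drop: "walk V E xs \<Longrightarrow> i < length xs \<Longrightarrow> walk V E (drop i xs)"
  by (auto simp: walk_iff dest: in_set_dropD)

lemma walk_Cons: "walk V E xs \<Longrightarrow> X \<in> V \<Longrightarrow> E (hd xs) X \<noteq> {} \<Longrightarrow> walk V E (X # xs)"
  by (auto simp: walk_iff hd_conv_nth nth_Cons split: nat.splits)

lemma nth_append_tl:
  assumes "xs \<noteq> []" "ys \<noteq> []" "last xs = hd ys" "length xs - 1 \<le> i"
  shows "(xs @ tl ys) ! i = ys ! (i - (length xs - 1))"
proof (cases "i < length xs")
  case True
  with assms have "i = length xs - 1" by auto
  with assms show ?thesis by (simp add: nth_append last_conv_nth hd_conv_nth)
next
  case False
  then have "(xs @ tl ys) ! i = tl ys ! (i - length xs)" by (simp add: nth_append)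
  also have "\<dots> = ys ! (i - (length xs - 1))"
    using False assms(1,2) by (cases xs; cases ys) (auto simp: Suc_diff_Suc)
  finally show ?thesis .
qed

lemma last_append_tl: "ys \<noteq> [] \<Longrightarrow> xs \<noteq> [] \<Longrightarrow> last xs = hd ys \<Longrightarrow> last (xs @ tl ys) = last ys"
  by (cases ys) (auto simp: last_append)

lemma walk_append:
  assumes "walk V E xs" "walk V E ys" "last xs = hd ys"
  shows "walk V E (xs @ tl ys)"
  unfolding walk_iff
proof (intro conjI allI impI)
  have ne: "xs \<noteq> []" "ys \<noteq> []" using assms by (auto dest: walk_nonempty)
  show "xs @ tl ys \<noteq> []" using ne by simp
  show "set (xs @ tl ys) \<subseteq> V" using assms ne by (auto simp: walk_iff dest: list.set_sel(2)[rotated])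
  fix k assume k: "Suc k < length (xs @ tl ys)"
  show "E ((xs @ tl ys) ! Suc k) ((xs @ tl ys) ! k) \<noteq> {}"
  proof (cases "Suc k < length xs")
    case True
    then show ?thesis using walk_edge[OF assms(1)] by (simp add: nth_append)
  next
    case False
    then have "(xs @ tl ys) ! Suc k = ys ! Suc (k - (length xs - 1))"
      "(xs @ tl ys) ! k = ys ! (k - (length xs - 1))"
      using nth_append_tl[OF ne assms(3)] by (auto simp: Suc_diff_le)
    moreover have "Suc (k - (length xs - 1)) < length ys" using False k ne by auto
    ultimately show ?thesis using walk_edge[OF assms(2)] by simp
  qed
qed

lemma ancestor_iff_walk: "ancestor V E X Y \<longleftrightarrow> (\<exists>xs. walk V E xs \<and> hd xs = X \<and> last xs = Y)"
  unfolding ancestor_def walk_def by blast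

lemma walk_ancestor_nth:
  assumes "walk V E xs" "i \<le> j" "j < length xs"
  shows "ancestor V E (xs ! i) (xs ! j)"
proof -
  let ?ys = "drop i (take (Suc j) xs)"
  have "walk V E ?ys" using assms by (intro walk_drop walk_take) auto
  moreover have "hd ?ys = xs ! i" "last ?ys = xs ! j"
    using assms by (auto simp: hd_drop_conv_nth last_conv_nth)
  ultimately show ?thesis unfolding ancestor_iff_walk by blast
qed

lemma ancestor_refl: "X \<in> V \<Longrightarrow> ancestor V E X X"
  unfolding ancestor_iff_walk by (intro exI[of _ "[X]"]) (simp add: walk_singleton)

lemma ancestor_in: "ancestor V E X Y \<Longrightarrow> X \<in> V \<and> Y \<in> V"
  unfolding ancestor_iff_walk walk_iff by (auto simp: hd_conv_nth last_conv_nth)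

lemma ancestor_trans:
  assumes "ancestor V E X Y" "ancestor V E Y Z"
  shows "ancestor V E X Z"
proof -
  obtain xs ys where xs: "walk V E xs" "hd xs = X" "last xs = Y"
    and ys: "walk V E ys" "hd ys = Y" "last ys = Z"
    using assms unfolding ancestor_iff_walk by blast
  then have "hd (xs @ tl ys) = X" "last (xs @ tl ys) = Z"
    using last_append_tl walk_nonempty by (metis hd_append2)+
  with walk_append[OF xs(1) ys(1)] xs ys show ?thesis
    unfolding ancestor_iff_walk by auto
qed

lemma isotypic_refl: "X \<in> V \<Longrightarrow> isotypic V E X X"
  unfolding isotypic_def by (simp add: ancestor_refl)

lemma isotypic_sym: "isotypic V E X Y \<Longrightarrow> isotypic V E Y X"
  unfolding isotypic_def by simp

lemma isotypic_trans: "isotypic V E X Y \<Longrightarrow> isotypic V E Y Z \<Longrightarrow> isotypic V E X Z"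
  unfolding isotypic_def by (blast intro: ancestor_trans)

lemma iso_class_eq_iff:
  assumes "Y \<in> V"
  shows "iso_class V E X = iso_class V E Y \<longleftrightarrow> isotypic V E X Y"
proof
  assume "iso_class V E X = iso_class V E Y"
  moreover have "Y \<in> iso_class V E Y" unfolding iso_class_def using assms isotypic_refl by simp
  ultimately have "Y \<in> iso_class V E X" by simp
  then show "isotypic V E X Y" unfolding iso_class_def by simp
next
  assume XY: "isotypic V E X Y"
  have "isotypic V E X Z \<longleftrightarrow> isotypic V E Y Z" for Z
    using XY isotypic_sym isotypic_trans by metis
  then show "iso_class V E X = iso_class V E Y" unfolding iso_class_def by simp
qed

definition full_walk :: "'v set \<Rightarrow> ('v \<Rightarrow> 'v \<Rightarrow> 'e set) \<Rightarrow> 'v list \<Rightarrow> 'v \<Rightarrow> bool" where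
  "full_walk V E xs X \<longleftrightarrow> walk V E xs \<and> primitive V E (hd xs) \<and> last xs = X"

lemma full_walk_iff_full_evolution: "full_walk V E xs X \<longleftrightarrow> (\<exists>es. full_evolution V E xs es X)"
  unfolding full_walk_def full_evolution_def walk_def by blast

lemma height_full_walks: "height V E X = Inf {enat (length xs - 1) | xs. full_walk V E xs X}"
proof -
  have "(\<lambda>(as, es). enat (length es)) ` {(as, es). full_evolution V E as es X}
      = {enat (length xs - 1) | xs. full_walk V E xs X}"
    unfolding full_walk_iff_full_evolution
    by (force simp: full_evolution_def dest: evolution_length)
  then show ?thesis unfolding height_def by simp
qed

lemma height_le_full_walk: "full_walk V E xs X \<Longrightarrow> height V E X \<le> enat (length xs - 1)"
  unfolding height_full_walks by (blast intro: Inf_lower)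

lemma height_attained:
  assumes "height V E X = enat k"
  obtains xs where "full_walk V E xs X" "length xs = Suc k"
proof -
  let ?S = "{enat (length xs - 1) | xs. full_walk V E xs X}"
  have "?S \<noteq> {}" using assms unfolding height_full_walks by (auto simp: Inf_enat_def split: if_splits)
  then have "Inf ?S \<in> ?S" unfolding Inf_enat_def by (auto intro: LeastI)
  then obtain xs where "full_walk V E xs X" "length xs - 1 = k"
    using assms unfolding height_full_walks by auto
  moreover have "xs \<noteq> []" using \<open>full_walk V E xs X\<close> by (auto simp: full_walk_def dest: walk_nonempty)
  ultimately show ?thesis using that by (cases xs) auto
qed

lemma full_walk_last_in: "full_walk V E xs X \<Longrightarrow> X \<in> V"
  unfolding full_walk_def walk_iff by auto

lemma full_walk_take:
  "full_walk V E xs X \<Longrightarrow> i < length xs \<Longrightarrow> full_walk V E (take (Suc i) xs) (xs ! i)"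
  unfolding full_walk_def by (auto simp: walk_take walk_nonempty last_conv_nth)

lemma full_walk_append:
  assumes "full_walk V E xs Y" "walk V E ys" "hd ys = Y"
  shows "full_walk V E (xs @ tl ys) (last ys)"
  using assms walk_append[of V E xs ys] last_append_tl[of ys xs] walk_nonempty[of V E]
  unfolding full_walk_def by (simp add: hd_append2)

lemma height_nth_of_minimal_full_walk:
  assumes xs: "full_walk V E xs X" and min: "height V E X = enat (length xs - 1)" and i: "i < length xs"
  shows "height V E (xs ! i) = enat i"
proof (rule antisym)
  show "height V E (xs ! i) \<le> enat i"
    using height_le_full_walk[OF full_walk_take[OF xs i]] i by simp
  show "enat i \<le> height V E (xs ! i)"
  proof (rule ccontr)
    assume "\<not> enat i \<le> height V E (xs ! i)"
    then obtain j where j: "height V E (xs ! i) = enat j" "j < i"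
      by (cases "height V E (xs ! i)") auto
    obtain zs where zs: "full_walk V E zs (xs ! i)" "length zs = Suc j"
      using height_attained[OF j(1)] by blast
    have "walk V E (drop i xs)" "hd (drop i xs) = xs ! i" "last (drop i xs) = X"
      using xs i by (auto simp: full_walk_def walk_drop hd_drop_conv_nth)
    then have "full_walk V E (zs @ tl (drop i xs)) X"
      using full_walk_append[OF zs(1)] by metis
    from height_le_full_walk[OF this] show False
      using min zs(2) j(2) i by simp
  qed
qed

lemma ancestor_height_le:
  assumes "monotonous V E" "ancestor V E X Y"
  shows "height V E X \<le> height V E Y"
proof -
  obtain xs where xs: "walk V E xs" "hd xs = X" "last xs = Y"
    using assms(2) unfolding ancestor_iff_walk by blast
  have "height V E (xs ! 0) \<le> height V E (xs ! i)" if "i < length xs" for i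
    using that
  proof (induction i)
    case (Suc i)
    have "height V E (xs ! i) \<le> height V E (xs ! Suc i)"
      using assms(1) walk_edge[OF xs(1) Suc.prems] walk_nth_in[OF xs(1)] Suc.prems
      unfolding monotonous_def by simp
    with Suc show ?case by simp
  qed simp
  moreover have "xs \<noteq> []" using xs(1) by (rule walk_nonempty)
  ultimately show ?thesis using xs by (metis hd_conv_nth last_conv_nth diff_less length_greater_0_conv zero_less_one)
qed

lemma isotypic_height_eq: "monotonous V E \<Longrightarrow> isotypic V E X Y \<Longrightarrow> height V E X = height V E Y"
  unfolding isotypic_def by (blast intro: antisym ancestor_height_le)

lemma strict_mono_on_lessThan_gap:
  fixes r :: "nat \<Rightarrow> nat"
  assumes "strict_mono_on {..<L} r" "i \<le> j" "j < L"
  shows "r i + (j - i) \<le> r j"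
  using assms(2,3)
proof (induction j)
  case (Suc j)
  show ?case
  proof (cases "i = Suc j")
    case False
    then have "r i + (j - i) \<le> r j" using Suc by simp
    moreover have "r j < r (Suc j)" using strict_mono_onD[OF assms(1)] Suc.prems by simp
    ultimately show ?thesis using False Suc.prems by simp
  qed simp
qed simp

definition universal_walk :: "'v set \<Rightarrow> ('v \<Rightarrow> 'v \<Rightarrow> 'e set) \<Rightarrow> 'v list \<Rightarrow> 'v \<Rightarrow> bool" where
  "universal_walk V E xs X \<longleftrightarrow> full_walk V E xs X \<and> (\<forall>ys. full_walk V E ys X \<longrightarrow> embeds V E xs ys)"

lemma universal_evolution_walk: "universal_evolution V E as es X \<Longrightarrow> universal_walk V E as X"
  unfolding universal_evolution_def universal_walk_def full_walk_iff_full_evolution by blast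

lemma phylogenetic_vertex_iff_universal_walk:
  "phylogenetic_vertex V E X \<longleftrightarrow> (\<exists>xs. universal_walk V E xs X)"
  unfolding phylogenetic_vertex_def universal_evolution_def universal_walk_def
    full_walk_iff_full_evolution by blast

lemma universal_walk_height:
  assumes xs: "universal_walk V E xs X"
  shows "height V E X = enat (length xs - 1)"
proof -
  have upper: "height V E X \<le> enat (length xs - 1)"
    using xs unfolding universal_walk_def by (blast intro: height_le_full_walk)
  then obtain k where k: "height V E X = enat k" by (cases "height V E X") auto
  obtain zs where zs: "full_walk V E zs X" "length zs = Suc k"
    using height_attained[OF k] by blast
  then have "length xs \<le> Suc k"
    using xs unfolding universal_walk_def embeds_def by auto
  with upper k show ?thesis by simp
qed

lemma parent_via_universal_walk:
  assumes pq: "phylogenetic_quiver V E" and X: "X \<in> V"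
  obtains X' as where "isotypic V E X X'" "universal_walk V E as X'"
    "parent V E (iso_class V E X) = iso_class V E (as ! (length as - 2))"
proof -
  let ?Q = "\<lambda>P. \<exists>X'\<in>iso_class V E X. \<exists>as es. universal_evolution V E as es X' \<and> P = as ! (length es - 1)"
  have "phylogenetic_vertex V E X" using pq X unfolding phylogenetic_quiver_def by blast
  then have "\<exists>P. ?Q P"
    using X isotypic_refl unfolding phylogenetic_vertex_def iso_class_def by fastforce
  from someI_ex[OF this] obtain X' as es where X': "isotypic V E X X'"
    and ue: "universal_evolution V E as es X'" and P: "(SOME P. ?Q P) = as ! (length es - 1)"
    unfolding iso_class_def by blast
  have "length es = length as - 1"
    using ue unfolding universal_evolution_def full_evolution_def by (blast dest: evolution_length)
  with P have "parent V E (iso_class V E X) = iso_class V E (as ! (length as - 2))"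
    unfolding parent_def by (simp add: numeral_2_eq_2)
  with X' universal_evolution_walk[OF ue] show ?thesis by (rule that)
qed

lemma isotypic_nth_universal_walk:
  assumes mono: "monotonous V E" and as: "universal_walk V E as X'"
    and vs: "full_walk V E vs X" "height V E X = enat (length vs - 1)"
    and XX': "ancestor V E X X'" and i: "Suc i < length vs"
  shows "isotypic V E (as ! i) (vs ! i)"
proof -
  have "enat (length vs - 1) \<le> enat (length as - 1)"
    using ancestor_height_le[OF mono XX'] universal_walk_height[OF as] vs(2) by simp
  then have i_as: "i < length as" using i by simp
  have h_as: "height V E (as ! i) = enat i"
    using height_nth_of_minimal_full_walk[OF _ universal_walk_height[OF as] i_as] as
    unfolding universal_walk_def by blast
  obtain ps where ps: "walk V E ps" "hd ps = X" "last ps = X'"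
    using XX' unfolding ancestor_iff_walk by blast
  define W where "W = vs @ tl ps"
  have "full_walk V E W X'" unfolding W_def using full_walk_append[OF vs(1) ps(1,2)] ps(3) by simp
  then obtain r where "r i < length W" and iso: "isotypic V E (as ! i) (W ! r i)"
    using as i_as unfolding universal_walk_def embeds_def by blast
  have vs_ne: "vs \<noteq> []" and ps_ne: "ps \<noteq> []"
    using vs(1) ps(1) by (auto simp: full_walk_def dest: walk_nonempty)
  txt \<open>Heights rule out both a shifted image inside \<open>vs\<close> and an image in the appended tail,
    whose vertices descend from \<open>X\<close>.\<close>
  show ?thesis
  proof (cases "r i < length vs - 1")
    case True
    then have "height V E (W ! r i) = enat (r i)"
      using height_nth_of_minimal_full_walk[OF vs] unfolding W_def by (auto simp: nth_append)
    then have "r i = i" using isotypic_height_eq[OF mono iso] h_as by simp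
    with iso i show ?thesis unfolding W_def by (simp add: nth_append)
  next
    case False
    with \<open>r i < length W\<close> have "W ! r i = ps ! (r i - (length vs - 1))" "r i - (length vs - 1) < length ps"
      using nth_append_tl[OF vs_ne ps_ne] ps(2) vs(1) ps_ne unfolding W_def full_walk_def
      by (auto simp flip: length_greater_0_conv)
    then have "ancestor V E X (W ! r i)"
      using walk_ancestor_nth[OF ps(1), of 0] ps(2) by (simp add: hd_conv_nth ps_ne)
    then have "height V E X \<le> height V E (as ! i)"
      using ancestor_height_le[OF mono] isotypic_height_eq[OF mono iso] by simp
    with vs(2) h_as i show ?thesis by simp
  qed
qed

lemma parent_iso_class:
  assumes pq: "phylogenetic_quiver V E"
    and vs: "full_walk V E vs X" "length vs = Suc (Suc k)" and hX: "height V E X = enat (Suc k)"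
  shows "parent V E (iso_class V E X) = iso_class V E (vs ! k)"
proof -
  have mono: "monotonous V E" using pq unfolding phylogenetic_quiver_def by simp
  obtain X' as where X': "isotypic V E X X'" and as: "universal_walk V E as X'"
    and parent: "parent V E (iso_class V E X) = iso_class V E (as ! (length as - 2))"
    using parent_via_universal_walk[OF pq full_walk_last_in[OF vs(1)]] by blast
  have "length as = Suc (Suc k)"
    using universal_walk_height[OF as] isotypic_height_eq[OF mono X'] hX by simp
  moreover have "isotypic V E (as ! k) (vs ! k)"
    using isotypic_nth_universal_walk[OF mono as vs(1) _ _] X' vs(2) hX
    unfolding isotypic_def by simp
  moreover have "vs ! k \<in> V" using vs by (auto simp: full_walk_def intro: walk_nth_in)
  ultimately show ?thesis using parent by (simp add: iso_class_eq_iff)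
qed

lemma parent_pow_iso_class:
  assumes pq: "phylogenetic_quiver V E"
    and us: "full_walk V E us B" "length us = Suc n" and hB: "height V E B = enat n"
    and "j \<le> n"
  shows "(parent V E ^^ j) (iso_class V E B) = iso_class V E (us ! (n - j))"
  using \<open>j \<le> n\<close>
proof (induction j)
  case 0
  have "us ! n = B"
    using us unfolding full_walk_def by (metis last_conv_nth list.size(3) nat.distinct(1) diff_Suc_1)
  then show ?case by simp
next
  case (Suc j)
  define k where "k = n - Suc j"
  have nj: "n - j = Suc k" using Suc.prems unfolding k_def by simp
  have "full_walk V E (take (Suc (Suc k)) us) (us ! Suc k)"
    using full_walk_take[OF us(1)] us(2) nj by (metis diff_le_self le_imp_less_Suc)
  moreover have "height V E (us ! Suc k) = enat (Suc k)"
    using height_nth_of_minimal_full_walk[OF us(1)] us(2) hB nj by (metis diff_Suc_1 diff_le_self le_imp_less_Suc)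
  ultimately have "parent V E (iso_class V E (us ! Suc k)) = iso_class V E (us ! k)"
    using parent_iso_class[OF pq] us(2) nj by fastforce
  with Suc nj show ?case unfolding k_def by simp
qed

lemma mem_clade_iff: "X \<in> clade V E A \<longleftrightarrow> ancestor V E A X"
  unfolding clade_def using ancestor_in by fastforce

lemma clade_subset: "clade V E A \<subseteq> V"
  unfolding clade_def by blast

lemma walk_clade_iff: "walk (clade V E A) E ys \<longleftrightarrow> walk V E ys \<and> hd ys \<in> clade V E A"
proof
  assume "walk (clade V E A) E ys"
  then show "walk V E ys \<and> hd ys \<in> clade V E A"
    using clade_subset[of V E A] unfolding walk_iff by (auto simp: hd_conv_nth)
next
  assume ys: "walk V E ys \<and> hd ys \<in> clade V E A"
  have "ys ! i \<in> clade V E A" if "i < length ys" for i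
    using ys walk_ancestor_nth[of V E ys 0 i] that
    unfolding mem_clade_iff by (auto simp: hd_conv_nth walk_nonempty intro: ancestor_trans)
  with ys show "walk (clade V E A) E ys"
    unfolding walk_iff by (auto simp: in_set_conv_nth)
qed

lemma ancestor_clade_iff:
  assumes "X \<in> clade V E A"
  shows "ancestor (clade V E A) E X Y \<longleftrightarrow> ancestor V E X Y"
  using assms unfolding ancestor_iff_walk walk_clade_iff by blast

lemma isotypic_clade_iff:
  assumes "X \<in> clade V E A"
  shows "isotypic (clade V E A) E X Y \<longleftrightarrow> isotypic V E X Y"
proof -
  have "Y \<in> clade V E A" if "ancestor V E X Y"
    using assms that unfolding mem_clade_iff by (rule ancestor_trans)
  then show ?thesis
    using assms unfolding isotypic_def by (auto simp: ancestor_clade_iff)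
qed

lemma primitive_clade_iff:
  assumes "A \<in> V"
  shows "primitive (clade V E A) E X \<longleftrightarrow> isotypic V E X A"
proof
  assume X: "primitive (clade V E A) E X"
  then have "X \<in> clade V E A" unfolding primitive_def by simp
  moreover have A: "A \<in> clade V E A" using assms by (simp add: mem_clade_iff ancestor_refl)
  ultimately have "ancestor (clade V E A) E A X"
    by (simp add: ancestor_clade_iff mem_clade_iff)
  with X have "isotypic (clade V E A) E A X" unfolding primitive_def by blast
  with A show "isotypic V E X A" by (simp add: isotypic_clade_iff isotypic_sym)
next
  assume XA: "isotypic V E X A"
  then have X: "X \<in> clade V E A" unfolding isotypic_def mem_clade_iff by simp
  have "isotypic (clade V E A) E Y X" if "ancestor (clade V E A) E Y X" for Y
  proof -
    have "Y \<in> clade V E A" using that unfolding ancestor_iff_walk walk_clade_iff by blast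
    then have "ancestor V E X Y"
      using XA unfolding isotypic_def mem_clade_iff by (blast intro: ancestor_trans)
    with that X show ?thesis unfolding isotypic_def by (simp add: ancestor_clade_iff)
  qed
  with X show "primitive (clade V E A) E X" unfolding primitive_def by simp
qed

lemma full_walk_clade_iff:
  assumes "A \<in> V"
  shows "full_walk (clade V E A) E ys B \<longleftrightarrow> walk V E ys \<and> isotypic V E (hd ys) A \<and> last ys = B"
  unfolding full_walk_def walk_clade_iff primitive_clade_iff[OF assms]
  by (auto simp: isotypic_def mem_clade_iff)

lemma universal_walk_embeds_suffix:
  assumes us: "universal_walk V E us B"
    and ys: "walk V E ys" "last ys = B" and h: "height V E (hd ys) = enat m"
  shows "\<exists>g. strict_mono_on {..<length us - m} g \<and>
    (\<forall>k < length us - m. g k < length ys \<and> isotypic V E (us ! (m + k)) (ys ! g k))"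
proof -
  obtain ws where ws: "full_walk V E ws (hd ys)" "length ws = Suc m"
    using height_attained[OF h] by blast
  have "full_walk V E (ws @ tl ys) B" using full_walk_append[OF ws(1) ys(1)] ys(2) by simp
  then obtain r where r: "strict_mono_on {..<length us} r"
      "\<And>i. i < length us \<Longrightarrow> r i < length (ws @ tl ys) \<and> isotypic V E (us ! i) ((ws @ tl ys) ! r i)"
    using us unfolding universal_walk_def embeds_def by blast
  have r_ge: "m + k \<le> r (m + k)" if "k < length us - m" for k
    using strict_mono_on_lessThan_gap[OF r(1), of 0 "m + k"] that by linarith
  define g where "g k = r (m + k) - m" for k
  have "strict_mono_on {..<length us - m} g"
  proof (rule strict_mono_onI)
    fix k l assume "k \<in> {..<length us - m}" "l \<in> {..<length us - m}" "k < l"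
    then have "r (m + k) < r (m + l)" "m + k \<le> r (m + k)"
      using strict_mono_onD[OF r(1), of "m + k" "m + l"] r_ge[of k] by auto
    then show "g k < g l" unfolding g_def by simp
  qed
  moreover have "g k < length ys \<and> isotypic V E (us ! (m + k)) (ys ! g k)" if "k < length us - m" for k
  proof -
    have ne: "ws \<noteq> []" "ys \<noteq> []" using ws(2) walk_nonempty[OF ys(1)] by auto
    have "(ws @ tl ys) ! r (m + k) = ys ! g k"
      using nth_append_tl[OF ne] ws r_ge[OF that] unfolding full_walk_def g_def by simp
    moreover have "r (m + k) < length ws + length ys - 1"
      using r(2)[of "m + k"] that ne by (simp flip: length_greater_0_conv)
    ultimately show ?thesis using r(2)[of "m + k"] that ws(2) r_ge[OF that] unfolding g_def by auto
  qed
  ultimately show ?thesis by blast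
qed

lemma universal_walk_clade_Cons:
  assumes A: "A \<in> V"
    and xs: "walk V E xs" "last xs = B" "hd xs \<in> clade V E A" "E (hd xs) A \<noteq> {}"
    and emb: "\<And>bs. full_walk (clade V E A) E bs B \<Longrightarrow> \<exists>g. strict_mono_on {..<length xs} g \<and> 0 < g 0 \<and>
      (\<forall>k < length xs. g k < length bs \<and> isotypic V E (xs ! k) (bs ! g k))"
  shows "universal_walk (clade V E A) E (A # xs) B"
  unfolding universal_walk_def
proof (intro conjI allI impI)
  have ne: "xs \<noteq> []" using xs(1) by (rule walk_nonempty)
  have "walk V E (A # xs)" using walk_Cons[OF xs(1) A xs(4)] .
  then show "full_walk (clade V E A) E (A # xs) B"
    using ne xs(2) A by (simp add: full_walk_clade_iff isotypic_refl)
  fix bs assume bs: "full_walk (clade V E A) E bs B"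
  then have bs': "walk V E bs" "isotypic V E (hd bs) A" by (auto simp: full_walk_clade_iff[OF A])
  obtain g where g: "strict_mono_on {..<length xs} g" "0 < g 0"
      "\<And>k. k < length xs \<Longrightarrow> g k < length bs \<and> isotypic V E (xs ! k) (bs ! g k)"
    using emb[OF bs] by blast
  define h where "h = case_nat 0 g"
  have g0: "g 0 \<le> g k" if "k < length xs" for k
    using strict_mono_on_lessThan_gap[OF g(1), of 0 k] that by simp
  have "strict_mono_on {..<length (A # xs)} h"
  proof (rule strict_mono_onI)
    fix i j assume "i \<in> {..<length (A # xs)}" "j \<in> {..<length (A # xs)}" "i < j"
    then show "h i < h j"
      using g(2) g0 strict_mono_onD[OF g(1)] unfolding h_def
      by (cases i; cases j) (auto intro: less_le_trans)
  qed
  moreover have "h k < length bs \<and> isotypic (clade V E A) E ((A # xs) ! k) (bs ! h k)"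
    if "k < length (A # xs)" for k
  proof (cases k)
    case 0
    have "isotypic V E A (bs ! 0)" using bs' by (simp add: hd_conv_nth walk_nonempty isotypic_sym)
    then show ?thesis using 0 A walk_nonempty[OF bs'(1)]
      by (simp add: h_def isotypic_clade_iff mem_clade_iff ancestor_refl)
  next
    case (Suc i)
    have "xs ! i \<in> clade V E A"
      using xs(1,3) walk_ancestor_nth[OF xs(1), of 0 i] that Suc
      unfolding mem_clade_iff by (auto simp: hd_conv_nth ne intro: ancestor_trans)
    then show ?thesis using g(3)[of i] that Suc by (simp add: h_def isotypic_clade_iff)
  qed
  moreover have "length (A # xs) \<le> length bs"
    using strict_mono_on_lessThan_gap[OF g(1), of 0 "length xs - 1"] g(2) g(3)[of "length xs - 1"] ne
    by (auto simp flip: length_greater_0_conv)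
  ultimately show "embeds (clade V E A) E (A # xs) bs" unfolding embeds_def by blast
qed

lemma universal_walk_embeds_after_start:
  assumes mono: "monotonous V E" and us: "universal_walk V E us B" "m < length us"
    and hA: "height V E A = enat m" and not_iso: "\<not> isotypic V E (us ! m) A"
    and ys: "walk V E ys" "isotypic V E (hd ys) A" "last ys = B"
  shows "\<exists>g. strict_mono_on {..<length us - m} g \<and> 0 < g 0 \<and>
    (\<forall>k < length us - m. g k < length ys \<and> isotypic V E (us ! (m + k)) (ys ! g k))"
proof -
  have "height V E (hd ys) = enat m" using isotypic_height_eq[OF mono ys(2)] hA by simp
  then obtain g where g: "strict_mono_on {..<length us - m} g"
      "\<forall>k < length us - m. g k < length ys \<and> isotypic V E (us ! (m + k)) (ys ! g k)"
    using universal_walk_embeds_suffix[OF us(1) ys(1,3)] by blast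
  have "g 0 \<noteq> 0"
  proof
    assume "g 0 = 0"
    then have "isotypic V E (us ! m) (hd ys)"
      using g(2)[rule_format, of 0] us(2) by (simp add: hd_conv_nth walk_nonempty[OF ys(1)])
    with ys(2) not_iso show False by (blast intro: isotypic_trans)
  qed
  with g show ?thesis by blast
qed

lemma universal_walk_clade_Cons_drop:
  assumes mono: "monotonous V E" and reg: "regular V E A" and hA: "height V E A = enat m"
    and us: "universal_walk V E us B" "m < length us" and AB: "ancestor V E A B"
    and not_iso: "\<not> isotypic V E (us ! m) A"
  shows "universal_walk (clade V E A) E (A # drop m us) B"
proof -
  have A: "A \<in> V" using reg unfolding regular_def by simp
  note embeds = universal_walk_embeds_after_start[OF mono us hA not_iso]
  obtain ys where ys: "walk V E ys" "hd ys = A" "last ys = B" using AB unfolding ancestor_iff_walk by blast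
  then obtain g where "isotypic V E (us ! m) (ys ! g 0)" "g 0 < length ys"
    using embeds[of ys] us(2) isotypic_refl[OF A] by fastforce
  then have us_m: "us ! m \<in> clade V E A"
    using walk_ancestor_nth[OF ys(1), of 0 "g 0"] ys(2) unfolding mem_clade_iff isotypic_def
    by (auto simp: hd_conv_nth walk_nonempty[OF ys(1)] intro: ancestor_trans)
  have "height V E (us ! m) = height V E A"
    using height_nth_of_minimal_full_walk[OF _ universal_walk_height[OF us(1)] us(2)] us(1) hA
    unfolding universal_walk_def by simp
  then have edge: "E (us ! m) A \<noteq> {}" using reg us_m unfolding regular_def by blast
  show ?thesis
  proof (rule universal_walk_clade_Cons[OF A])
    show "walk V E (drop m us)" "last (drop m us) = B" "hd (drop m us) \<in> clade V E A"
      "E (hd (drop m us)) A \<noteq> {}"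
      using us us_m edge unfolding universal_walk_def full_walk_def
      by (auto simp: walk_drop hd_drop_conv_nth)
    fix bs assume "full_walk (clade V E A) E bs B"
    then show "\<exists>g. strict_mono_on {..<length (drop m us)} g \<and> 0 < g 0 \<and>
        (\<forall>k < length (drop m us). g k < length bs \<and> isotypic V E (drop m us ! k) (bs ! g k))"
      using embeds[of bs] by (simp add: full_walk_clade_iff[OF A])
  qed
qed

theorem lemma9p6:
  fixes V :: "'v set" and E :: "'v \<Rightarrow> 'v \<Rightarrow> 'e set" and A B :: 'v and m n :: nat
  assumes "phylogenetic_quiver V E"
    and "regular V E A"
    and "B \<in> clade V E A"
    and "height V E A = enat m"
    and "height V E B = enat n"
    and "(parent V E ^^ (n - m)) (iso_class V E B) \<noteq> iso_class V E A"
  shows "phylogenetic_vertex (clade V E A) E B \<and> height (clade V E A) E B = enat (n - m + 1)"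
proof -
  have mono: "monotonous V E" using assms(1) unfolding phylogenetic_quiver_def by simp
  have A: "A \<in> V" using assms(2) unfolding regular_def by simp
  have AB: "ancestor V E A B" using assms(3) by (simp add: mem_clade_iff)
  have mn: "m \<le> n" using ancestor_height_le[OF mono AB] assms(4,5) by simp
  have "B \<in> V" using assms(3) unfolding clade_def by simp
  then obtain us where us: "universal_walk V E us B"
    using assms(1) unfolding phylogenetic_quiver_def phylogenetic_vertex_iff_universal_walk by blast
  have len_us: "length us = Suc n"
    using universal_walk_height[OF us] assms(5) walk_nonempty us
    unfolding universal_walk_def full_walk_def by (cases us) auto
  have "iso_class V E (us ! m) \<noteq> iso_class V E A"
    using parent_pow_iso_class[OF assms(1) _ len_us assms(5), of "n - m"] us assms(6) mn
    unfolding universal_walk_def by simp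
  then have "\<not> isotypic V E (us ! m) A" using iso_class_eq_iff[OF A] by blast
  then have "universal_walk (clade V E A) E (A # drop m us) B"
    using universal_walk_clade_Cons_drop[OF mono assms(2,4) us _ AB] len_us mn by simp
  then show ?thesis
    using universal_walk_height len_us mn unfolding phylogenetic_vertex_iff_universal_walk by fastforce
qed

end
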